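(* Let $s\in\mathbb{N}$, $\bm{n}=(n_1,\dots,n_d)\in\mathbb{Z}^d$ with $\|\bm{n}\|_1\le s$, and $c_{\bm n}\in\mathbb{C}$ such that $|c_{\bm n}e^{i\bm n\cdot\bm x}|\le 1$ for all $\bm{x}\in\mathbb{R}^d$, where $e^{i\bm n\cdot\bm x}=e^{in_1x_1}\cdots e^{in_dx_d}$. Then there exists a PQC $U^{\bm n}(\bm{x})$ such that $$\langle 0|^{\otimes d}U^{\bm n}(\bm x)|0\rangle^{\otimes d}=c_{\bm n}e^{i\bm n\cdot\bm x}$$ for all $\bm x\in\mathbb{R}^d$. The width of the PQC is at most $d$, the depth is at most $6s+3$, and the number of parameters is at most $4s+3d$.
   Context: Here a PQC with input $\bm x\in\mathbb{R}^d$ is a quantum circuit built from single-qubit gates (and CNOTs), the single-qubit gates being Pauli rotations $R_Y(\theta)=\begin{pmatrix}\cos\frac\theta2&-\sin\frac\theta2\\ \sin\frac\theta2&\cos\frac\theta2\end{pmatrix}$, $R_Z(\theta)=\mathrm{diag}(e^{-i\theta/2},e^{i\theta/2})$ with trainable real angles not depending on $\bm x$, or data-encoding gates $R_Z(x_j)$ applied with a coordinate $x_j\in\mathbb{R}$ of the input (Pauli-$Z$ basis encoding). Width = number of qubits, depth = circuit depth, number of parameters = number of trainable angles. *)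

theory Defs
  imports Complex_Main
begin

text \<open>Computational basis states of a w-qubit register are indexed by naturals b < 2^w;
  qubit q of basis index b is the q-th binary digit of b (False = |0>, True = |1>).\<close>

definition qbit :: "nat \<Rightarrow> nat \<Rightarrow> bool" where
  "qbit b q = odd (b div 2 ^ q)"

definition set_qbit :: "nat \<Rightarrow> nat \<Rightarrow> bool \<Rightarrow> nat" where
  "set_qbit b q a = (if qbit b q = a then b else if a then b + 2 ^ q else b - 2 ^ q)"

type_synonym mat2 = "bool \<Rightarrow> bool \<Rightarrow> complex"

definition RYmat :: "real \<Rightarrow> mat2" where
  "RYmat \<theta> = (\<lambda>r c. if \<not> r \<and> \<not> c then complex_of_real (cos (\<theta>/2))
                  else if \<not> r \<and> c then - complex_of_real (sin (\<theta>/2))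
                  else if r \<and> \<not> c then complex_of_real (sin (\<theta>/2))
                  else complex_of_real (cos (\<theta>/2)))"

definition RZmat :: "real \<Rightarrow> mat2" where
  "RZmat \<theta> = (\<lambda>r c. if r \<noteq> c then 0
                  else if \<not> r then exp (- \<i> * complex_of_real (\<theta>/2))
                  else exp (\<i> * complex_of_real (\<theta>/2)))"

definition apply1 :: "mat2 \<Rightarrow> nat \<Rightarrow> (nat \<Rightarrow> complex) \<Rightarrow> (nat \<Rightarrow> complex)" where
  "apply1 M q \<psi> = (\<lambda>b. M (qbit b q) False * \<psi> (set_qbit b q False)
                       + M (qbit b q) True * \<psi> (set_qbit b q True))"

definition apply_cnot :: "nat \<Rightarrow> nat \<Rightarrow> (nat \<Rightarrow> complex) \<Rightarrow> (nat \<Rightarrow> complex)" where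
  "apply_cnot c t \<psi> = (\<lambda>b. if qbit b c then \<psi> (set_qbit b t (\<not> qbit b t)) else \<psi> b)"

text \<open>Gates: trainable R_Y(theta) / R_Z(theta) on a qubit (angle independent of x),
  data-encoding gate R_Z(x_j) on a qubit (DataRZ q j), and CNOT (control, target).\<close>
datatype gate = RY nat real | RZ nat real | DataRZ nat nat | CNOT nat nat

fun gate_qubits :: "gate \<Rightarrow> nat list" where
  "gate_qubits (RY q _) = [q]"
| "gate_qubits (RZ q _) = [q]"
| "gate_qubits (DataRZ q _) = [q]"
| "gate_qubits (CNOT c t) = [c, t]"

fun gate_params :: "gate \<Rightarrow> nat" where
  "gate_params (RY _ _) = 1"
| "gate_params (RZ _ _) = 1"
| "gate_params (DataRZ _ _) = 0"
| "gate_params (CNOT _ _) = 0"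

fun gate_data_ok :: "nat \<Rightarrow> gate \<Rightarrow> bool" where
  "gate_data_ok d (DataRZ _ j) = (j < d)"
| "gate_data_ok d _ = True"

fun apply_gate :: "(nat \<Rightarrow> real) \<Rightarrow> gate \<Rightarrow> (nat \<Rightarrow> complex) \<Rightarrow> (nat \<Rightarrow> complex)" where
  "apply_gate x (RY q \<theta>) \<psi> = apply1 (RYmat \<theta>) q \<psi>"
| "apply_gate x (RZ q \<theta>) \<psi> = apply1 (RZmat \<theta>) q \<psi>"
| "apply_gate x (DataRZ q j) \<psi> = apply1 (RZmat (x j)) q \<psi>"
| "apply_gate x (CNOT c t) \<psi> = apply_cnot c t \<psi>"

text \<open>A circuit is given by its number of qubits (width) and a list of layers; each
  layer is a list of gates acting on pairwise disjoint qubits, so the circuit depth is at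
  most the number of layers.  Layers are applied first to last.\<close>
datatype circuit = Circuit nat "gate list list"

fun width :: "circuit \<Rightarrow> nat" where "width (Circuit w L) = w"
fun depth :: "circuit \<Rightarrow> nat" where "depth (Circuit w L) = length L"
fun gates :: "circuit \<Rightarrow> gate list" where "gates (Circuit w L) = concat L"

definition num_params :: "circuit \<Rightarrow> nat" where
  "num_params C = sum_list (map gate_params (gates C))"

fun wf_circuit :: "nat \<Rightarrow> circuit \<Rightarrow> bool" where
  "wf_circuit d (Circuit w L) =
     (\<forall>layer \<in> set L. distinct (concat (map gate_qubits layer))
        \<and> (\<forall>g \<in> set layer. (\<forall>q \<in> set (gate_qubits g). q < w) \<and> gate_data_ok d g))"

definition basis0 :: "nat \<Rightarrow> complex" where
  "basis0 = (\<lambda>b. if b = 0 then 1 else 0)"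

definition run :: "circuit \<Rightarrow> (nat \<Rightarrow> real) \<Rightarrow> (nat \<Rightarrow> complex)" where
  "run C x = fold (apply_gate x) (gates C) basis0"

text \<open>The amplitude <0|^{(x) w} U(x) |0>^{(x) w}, w = width C.\<close>
definition amp00 :: "circuit \<Rightarrow> (nat \<Rightarrow> real) \<Rightarrow> complex" where
  "amp00 C x = run C x 0"

end

theory Submission
  imports Defs
begin

text \<open>A single qubit suffices. Each data gate R_Z(x_j) multiplies the amplitudes of |0> and |1>
  by e^{-i x_j/2} and e^{i x_j/2}. Applying it 2|n_j| times before an R_Y(pi) bit flip when
  n_j < 0, and 2 n_j times after it when n_j > 0, leaves the state e^{i n.x}|1>. Then
  R_Y(-2 arcsin |c|) moves amplitude |c| e^{i n.x} back to |0>, and R_Z(-2 Arg c) supplies the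
  phase of c. The circuit has 2 ||n||_1 + 3 layers and 3 trainable angles.\<close>

definition ket1 :: "complex \<Rightarrow> complex \<Rightarrow> nat \<Rightarrow> complex" where
  "ket1 a b = (\<lambda>k. if k = 0 then a else if k = 1 then b else 0)"

lemma basis0_eq_ket1: "basis0 = ket1 1 0"
  by (auto simp: basis0_def ket1_def)

lemma apply1_qubit0_ket1:
  "apply1 M 0 (ket1 a b) =
     ket1 (M False False * a + M False True * b) (M True False * a + M True True * b)"
proof
  fix k :: nat
  have "k = 0 \<or> k = 1 \<or> (k > 1 \<and> (odd k \<longrightarrow> k - 1 > 1))"
    by presburger
  then show "apply1 M 0 (ket1 a b) k =
      ket1 (M False False * a + M False True * b) (M True False * a + M True True * b) k"
    by (auto simp: apply1_def ket1_def set_qbit_def qbit_def)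
qed

lemma apply_RY_ket1:
  "apply_gate x (RY 0 \<theta>) (ket1 a b) =
     ket1 (of_real (cos (\<theta>/2)) * a - of_real (sin (\<theta>/2)) * b)
       (of_real (sin (\<theta>/2)) * a + of_real (cos (\<theta>/2)) * b)"
  by (simp add: apply1_qubit0_ket1 RYmat_def)

lemma apply_RZ_ket1:
  "apply_gate x (RZ 0 \<theta>) (ket1 a b) =
     ket1 (exp (- \<i> * (\<theta>/2)) * a) (exp (\<i> * (\<theta>/2)) * b)"
  by (simp add: apply1_qubit0_ket1 RZmat_def)

lemma fold_DataRZ_ket1:
  "fold (apply_gate x) (map (DataRZ 0) js) (ket1 a b) =
     ket1 (exp (- \<i> * (sum_list (map x js) / 2)) * a) (exp (\<i> * (sum_list (map x js) / 2)) * b)"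
proof (induction js arbitrary: a b)
  case Nil
  then show ?case by simp
next
  case (Cons j js)
  have "apply_gate x (DataRZ 0 j) (ket1 a b) =
      ket1 (exp (- \<i> * (x j / 2)) * a) (exp (\<i> * (x j / 2)) * b)"
    by (simp add: apply1_qubit0_ket1 RZmat_def)
  with Cons show ?case
    by (simp add: mult.assoc exp_add[symmetric] algebra_simps add_divide_distrib)
qed

definition repeat_indices :: "(nat \<Rightarrow> nat) \<Rightarrow> nat \<Rightarrow> nat list" where
  "repeat_indices f d = concat (map (\<lambda>j. replicate (f j) j) [0..<d])"

lemma set_repeat_indices: "set (repeat_indices f d) \<subseteq> {..<d}"
  by (auto simp: repeat_indices_def)

lemma length_repeat_indices: "length (repeat_indices f d) = (\<Sum>j<d. f j)"
  by (induction d) (simp_all add: repeat_indices_def)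

lemma sum_list_map_repeat_indices:
  "sum_list (map x (repeat_indices f d)) = (\<Sum>j<d. real (f j) * x j)"
  by (induction d) (simp_all add: repeat_indices_def sum_list_replicate)

definition monomial_gates :: "(nat \<Rightarrow> int) \<Rightarrow> nat \<Rightarrow> gate list" where
  "monomial_gates n d =
     map (DataRZ 0) (repeat_indices (\<lambda>j. 2 * nat (- n j)) d) @ RY 0 pi #
     map (DataRZ 0) (repeat_indices (\<lambda>j. 2 * nat (n j)) d)"

lemma fold_monomial_gates:
  "fold (apply_gate x) (monomial_gates n d) basis0 =
     ket1 0 (exp (\<i> * (\<Sum>j<d. real_of_int (n j) * x j)))"
proof -
  define A where "A = (\<Sum>j<d. real (nat (- n j)) * x j)"
  define B where "B = (\<Sum>j<d. real (nat (n j)) * x j)"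
  have "real (nat k) - real (nat (- k)) = real_of_int k" for k :: int
    by (cases "k \<ge> 0") auto
  then have "B - A = (\<Sum>j<d. real_of_int (n j) * x j)"
    unfolding A_def B_def by (simp flip: sum_subtractf left_diff_distrib)
  then have "exp (- \<i> * A) * exp (\<i> * B) = exp (\<i> * (\<Sum>j<d. real_of_int (n j) * x j))"
    by (auto simp: exp_add[symmetric] algebra_simps simp flip: of_real_diff)
  moreover have "sum_list (map x (repeat_indices (\<lambda>j. 2 * nat (- n j)) d)) / 2 = A"
    "sum_list (map x (repeat_indices (\<lambda>j. 2 * nat (n j)) d)) / 2 = B"
    by (simp_all add: A_def B_def sum_list_map_repeat_indices sum_distrib_left mult_ac)
  ultimately show ?thesis
    by (simp add: monomial_gates_def basis0_eq_ket1 fold_DataRZ_ket1 apply_RY_ket1 ac_simps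
        del: apply_gate.simps)
qed

lemma length_monomial_gates:
  "length (monomial_gates n d) = 2 * (\<Sum>j<d. nat \<bar>n j\<bar>) + 1"
proof -
  have "nat (- k) + nat k = nat \<bar>k\<bar>" for k :: int
    by simp
  then show ?thesis
    by (simp add: monomial_gates_def length_repeat_indices sum_distrib_left[symmetric]
        flip: sum.distrib distrib_left)
qed

lemma length_monomial_gates_le:
  assumes "(\<Sum>j<d. \<bar>n j\<bar>) \<le> int s"
  shows "length (monomial_gates n d) \<le> 2 * s + 1"
proof -
  have "int (\<Sum>j<d. nat \<bar>n j\<bar>) = (\<Sum>j<d. \<bar>n j\<bar>)"
    by (simp add: of_nat_sum)
  with assms have "(\<Sum>j<d. nat \<bar>n j\<bar>) \<le> s"
    by linarith
  then show ?thesis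
    by (simp add: length_monomial_gates)
qed

definition coefficient_gates :: "complex \<Rightarrow> gate list" where
  "coefficient_gates c = [RY 0 (- 2 * arcsin (cmod c)), RZ 0 (- 2 * Arg c)]"

lemma fold_coefficient_gates:
  assumes "cmod c \<le> 1"
  shows "fold (apply_gate x) (coefficient_gates c) (ket1 0 z) 0 = c * z"
proof -
  have "sin (arcsin (cmod c)) = cmod c"
    using assms norm_ge_zero[of c] by (intro sin_arcsin) linarith+
  then have "fold (apply_gate x) (coefficient_gates c) (ket1 0 z) 0 = rcis (cmod c) (Arg c) * z"
    by (simp add: coefficient_gates_def apply_RY_ket1 apply_RZ_ket1 del: apply_gate.simps)
      (simp add: ket1_def rcis_def cis_conv_exp mult_ac)
  then show ?thesis
    by (simp add: rcis_cmod_Arg)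
qed

definition serial_circuit :: "gate list \<Rightarrow> circuit" where
  "serial_circuit gs = Circuit 1 (map (\<lambda>g. [g]) gs)"

lemma wf_serial_circuit:
  assumes "\<forall>g \<in> set gs. gate_qubits g = [0] \<and> gate_data_ok d g"
  shows "wf_circuit d (serial_circuit gs)"
  using assms by (simp add: serial_circuit_def)

lemma gates_serial_circuit: "gates (serial_circuit gs) = gs"
  by (simp add: serial_circuit_def concat_map_singleton)

lemma amp00_serial_circuit: "amp00 (serial_circuit gs) x = fold (apply_gate x) gs basis0 0"
  by (simp add: amp00_def run_def gates_serial_circuit)

theorem lemmaS4:
  fixes d s :: nat and n :: "nat \<Rightarrow> int" and c :: complex
  assumes "d \<ge> 1"
    and "(\<Sum>j<d. \<bar>n j\<bar>) \<le> int s"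
    and "\<forall>x :: nat \<Rightarrow> real.
           cmod (c * exp (\<i> * complex_of_real (\<Sum>j<d. real_of_int (n j) * x j))) \<le> 1"
  shows "\<exists>C. wf_circuit d C \<and> width C \<le> d \<and> depth C \<le> 6 * s + 3
             \<and> num_params C \<le> 4 * s + 3 * d
             \<and> (\<forall>x :: nat \<Rightarrow> real.
                  amp00 C x = c * exp (\<i> * complex_of_real (\<Sum>j<d. real_of_int (n j) * x j)))"
proof -
  define C where "C = serial_circuit (monomial_gates n d @ coefficient_gates c)"
  have "cmod c \<le> 1"
    using assms(3) by (auto dest: spec[of _ "\<lambda>_. 0"])
  then have "amp00 C x = c * exp (\<i> * (\<Sum>j<d. real_of_int (n j) * x j))" for x
    by (simp add: C_def amp00_serial_circuit fold_monomial_gates fold_coefficient_gates)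
  moreover have "wf_circuit d C"
    unfolding C_def using set_repeat_indices
    by (intro wf_serial_circuit) (fastforce simp: monomial_gates_def coefficient_gates_def)
  moreover have "depth C \<le> 2 * s + 3"
    using length_monomial_gates_le[OF assms(2)]
    by (simp add: C_def serial_circuit_def coefficient_gates_def)
  moreover have "num_params C = 3"
    by (simp add: C_def num_params_def gates_serial_circuit monomial_gates_def
        coefficient_gates_def comp_def)
  ultimately show ?thesis
    using assms(1) by (intro exI[of _ C]) (auto simp: C_def serial_circuit_def)
qed

end
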